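(* Let $G$, $\Sigma_o$, $S$ realized by $H=(Z,\Sigma,\xi,z_0)$, and $\Sigma_v\subseteq\Sigma_o$ be given, with All Attack Structure $M=(Q,\Sigma_M,f,q_0)$. For any attacker $A$ and any observation $\alpha\sigma\in P(\mathcal{L}(S_A/G))$ ($\sigma\in\Sigma_o$) such that $A$ is stealthy along $\alpha$, let $q_e=(q,\tilde q,z)=f(q_0,(\alpha\sigma)_A)$. Then $A$ is stealthy along $\alpha\sigma$ if and only if $q_e\notin Q_{\textsf{att}}$.
   Context: A plant is a finite automaton $G=(X,\Sigma,\delta,X_0)$ with partial transition function $\delta$ (extended to strings), initial states $X_0\subseteq X$; $\mathcal{L}(G,x_0)=\{s:\delta(x_0,s)\text{ defined}\}$, $\mathcal{L}(G)=\bigcup_{x_0\in X_0}\mathcal{L}(G,x_0)$. $\Sigma=\Sigma_o\dot\cup\Sigma_{uo}=\Sigma_c\dot\cup\Sigma_{uc}$, $P:\Sigma^*\to\Sigma_o^*$ the natural projection. A supervisor is $S:P(\mathcal{L}(G))\to\Gamma=\{\gamma\subseteq\Sigma:\Sigma_{uc}\subseteq\gamma\}$, realized by a deterministic automaton $H=(Z,\Sigma,\xi,z_0)$ with $\xi(z,\sigma)\neq z\Rightarrow\sigma\in\Sigma_o$ and $\Delta_H(\xi(z_0,s))=S(P(s))$ for $s\in\mathcal{L}(S/G)$ ($\Delta_H(z)$ = events defined at $z$). For any map $T$ from observable strings to subsets of $\Sigma$, $\mathcal{L}(T/G,x_0)$ is defined by $\epsilon\in\mathcal{L}(T/G,x_0)$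 and $s\sigma\in\mathcal{L}(T/G,x_0)$ iff $s\in\mathcal{L}(T/G,x_0)$, $s\sigma\in\mathcal{L}(G,x_0)$, $\sigma\in T(P(s))$; $\mathcal{L}(T/G)=\bigcup_{x_0}\mathcal{L}(T/G,x_0)$. The current-state estimate is $\mathcal{E}^C_{S/G}(\beta)=\{\delta(x_0,s):x_0\in X_0,s\in\mathcal{L}(S/G,x_0),P(s)=\beta\}$. An attacker, for vulnerable events $\Sigma_v\subseteq\Sigma_o$, is a map $A:P(\mathcal{L}(G))\to\Sigma_o\cup\{\epsilon\}$ with $A(\epsilon)=\epsilon$ and, for $\alpha\sigma\in P(\mathcal{L}(G))$, $A(\alpha\sigma)=\sigma$ if $\sigma\notin\Sigma_v$ and $A(\alpha\sigma)\in\Sigma_v\cup\{\epsilon\}$ if $\sigma\in\Sigma_v$. It induces $g_A(\epsilon)=\epsilon$, $g_A(\alpha\sigma)=g_A(\alpha)A(\alpha\sigma)$, and $S_A=S\circ g_A$. $A$ is stealthy along $\alpha\in P(\mathcal{L}(S_A/G))$ if $\mathcal{E}^C_{S/G}(g_A(\alpha))\neq\emptyset$. Operators: for $q\subseteq X$, $\gamma\subseteq\Sigma$, $\sigma\in\Sigma_o$: $\textsf{UR}_\gamma(q)=\{\delta(x,s):x\in q,s\in(\Sigma_{uo}\cap\gamma)^*\}$, $\textsf{NX}_\sigma(q)=\{\delta(x,\sigma):x\in q\}$, $\textsf{NX}_\epsilon(q)=q$, $\mathcal{O}(q,\gamma)=\{\sigma\in\Sigma_o\cap\gamma:\exists x\in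 q,\exists w\in(\Sigma_{uo}\cap\gamma)^*,\delta(x,w\sigma)\text{ defined}\}$. Augmented system: states $\tilde X\subseteq X_0\times X$, $\tilde X_0=\{(x_0,x_0)\}$, $\tilde\delta((x_0,x),\sigma)=(x_0,\delta(x,\sigma))$; $\widetilde{\textsf{UR}},\widetilde{\textsf{NX}},\mathcal{O}(\tilde q,\gamma)$ defined analogously. All Attack Structure: for $\sigma\in\Sigma_o$, $\hat\sigma$ is a doctored copy, $\hat\epsilon$ an erasure symbol; $\mathcal{V}(\sigma)=\{\hat\sigma':\sigma'\in\Sigma_v\}\cup\{\hat\epsilon\}$ if $\sigma\in\Sigma_v$, else $\{\hat\sigma\}$. $M=(Q,\Sigma_M,f,q_0)$ with $\Sigma_M=\Sigma_o\cup\{\hat\sigma\}\cup\{\hat\epsilon\}$, $q_0=(X_0,\tilde X_0,z_0)$, states reachable from $q_0$, $Q=Q_e\dot\cup Q_a$: environment states $(q,\tilde q,z)$, $q\subseteq X,\tilde q\subseteq\tilde X,z\in Z\cup\{z_{\textsf{att}}\}$ ($z_{\textsf{att}}$ new, $\Delta_H(z_{\textsf{att}})=\emptyset$); attack states $(q,\tilde q,z,\sigma)$. At $(q,\tilde q,z)$ enabled events are $\mathcal{O}(\tilde q,\Delta_H(z))$ if $z\in Z$, none if $z=z_{\textsf{att}}$, with $f((q,\tilde q,z),\sigma)=(q,\tilde q,z,\sigma)$. At $(q,\tilde q,z,\sigma)$ enabled events are $\mathcal{V}(\sigma)$, with $f((q,\tilde q,z,\sigma),\hat\sigma_a)=(q',\tilde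 q',z')$, $q'=\textsf{NX}_{\sigma_a}(\textsf{UR}_{\Delta_H(z)}(q))$, $\tilde q'=\widetilde{\textsf{NX}}_\sigma(\widetilde{\textsf{UR}}_{\Delta_H(z)}(\tilde q))$, $z'=\xi(z,\sigma_a)$ if $q'\ne\emptyset$ (with $\xi(z,\epsilon)=z$), $z'=z_{\textsf{att}}$ otherwise. $Q_{\textsf{att}}=\{(q,\tilde q,z)\in Q_e:z=z_{\textsf{att}}\}$ is the set of attack-revealing states. For an attacker $A$ and $\alpha=\sigma_1\cdots\sigma_n$, the extended string is $\alpha_A=\sigma_1\hat\sigma_{a1}\cdots\sigma_n\hat\sigma_{an}$ with $\sigma_{ai}=A(\sigma_1\cdots\sigma_i)$ (and $\hat\sigma_{ai}=\hat\epsilon$ when $\sigma_{ai}=\epsilon$). *)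

theory Defs
  imports Main
begin

fun dstar :: "('x \<Rightarrow> 'e \<Rightarrow> 'x option) \<Rightarrow> 'x \<Rightarrow> 'e list \<Rightarrow> 'x option" where
  "dstar d x [] = Some x"
| "dstar d x (e # s) = (case d x e of None \<Rightarrow> None | Some y \<Rightarrow> dstar d y s)"

(* A finite automaton G = (X, Sigma, delta, X0); Sigma is the (finite) type of events. *)
definition plant_wf :: "'x set \<Rightarrow> 'x set \<Rightarrow> ('x \<Rightarrow> 'e \<Rightarrow> 'x option) \<Rightarrow> bool" where
  "plant_wf X X0 d \<longleftrightarrow> finite X \<and> X0 \<subseteq> X \<and>
     (\<forall>x e y. d x e = Some y \<longrightarrow> x \<in> X \<and> y \<in> X)"

definition Lang :: "('x \<Rightarrow> 'e \<Rightarrow> 'x option) \<Rightarrow> 'x \<Rightarrow> 'e list set" where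
  "Lang d x0 = {s. dstar d x0 s \<noteq> None}"

definition LangG :: "('x \<Rightarrow> 'e \<Rightarrow> 'x option) \<Rightarrow> 'x set \<Rightarrow> 'e list set" where
  "LangG d X0 = (\<Union>x0\<in>X0. Lang d x0)"

definition proj :: "'e set \<Rightarrow> 'e list \<Rightarrow> 'e list" where
  "proj So s = filter (\<lambda>e. e \<in> So) s"

inductive_set Lsup :: "('x \<Rightarrow> 'e \<Rightarrow> 'x option) \<Rightarrow> 'e set \<Rightarrow> ('e list \<Rightarrow> 'e set) \<Rightarrow> 'x \<Rightarrow> 'e list set"
  for d So T x0 where
  Nil: "[] \<in> Lsup d So T x0"
| snoc: "s \<in> Lsup d So T x0 \<Longrightarrow> dstar d x0 (s @ [e]) \<noteq> None \<Longrightarrow> e \<in> T (proj So s)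
         \<Longrightarrow> s @ [e] \<in> Lsup d So T x0"

definition LsupG :: "('x \<Rightarrow> 'e \<Rightarrow> 'x option) \<Rightarrow> 'x set \<Rightarrow> 'e set \<Rightarrow> ('e list \<Rightarrow> 'e set) \<Rightarrow> 'e list set" where
  "LsupG d X0 So T = (\<Union>x0\<in>X0. Lsup d So T x0)"

definition estC :: "('x \<Rightarrow> 'e \<Rightarrow> 'x option) \<Rightarrow> 'x set \<Rightarrow> 'e set \<Rightarrow> ('e list \<Rightarrow> 'e set) \<Rightarrow> 'e list \<Rightarrow> 'x set" where
  "estC d X0 So S beta = {y. \<exists>x0\<in>X0. \<exists>s. s \<in> Lsup d So S x0 \<and> proj So s = beta \<and> dstar d x0 s = Some y}"

definition supervisor :: "('x \<Rightarrow> 'e \<Rightarrow> 'x option) \<Rightarrow> 'x set \<Rightarrow> 'e set \<Rightarrow> 'e set \<Rightarrow> ('e list \<Rightarrow> 'e set) \<Rightarrow> bool" where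
  "supervisor d X0 So Suco S \<longleftrightarrow> (\<forall>beta \<in> proj So ` LangG d X0. Suco \<subseteq> S beta)"

definition DeltaH :: "('z \<Rightarrow> 'e \<Rightarrow> 'z option) \<Rightarrow> 'z \<Rightarrow> 'e set" where
  "DeltaH xi z = {e. xi z e \<noteq> None}"

definition realizes :: "('x \<Rightarrow> 'e \<Rightarrow> 'x option) \<Rightarrow> 'x set \<Rightarrow> 'e set \<Rightarrow> ('e list \<Rightarrow> 'e set)
    \<Rightarrow> ('z \<Rightarrow> 'e \<Rightarrow> 'z option) \<Rightarrow> 'z \<Rightarrow> bool" where
  "realizes d X0 So S xi z0 \<longleftrightarrow>
     (\<forall>z e z'. xi z e = Some z' \<longrightarrow> z' \<noteq> z \<longrightarrow> e \<in> So) \<and>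
     (\<forall>s \<in> LsupG d X0 So S. \<exists>z. dstar xi z0 s = Some z \<and> DeltaH xi z = S (proj So s))"

(* A : P(L(G)) -> Sigma_o \<union> {eps}; None encodes eps *)
definition attacker :: "('x \<Rightarrow> 'e \<Rightarrow> 'x option) \<Rightarrow> 'x set \<Rightarrow> 'e set \<Rightarrow> 'e set \<Rightarrow> ('e list \<Rightarrow> 'e option) \<Rightarrow> bool" where
  "attacker d X0 So Sv A \<longleftrightarrow> A [] = None \<and>
     (\<forall>alpha e. alpha @ [e] \<in> proj So ` LangG d X0 \<longrightarrow>
        (e \<notin> Sv \<longrightarrow> A (alpha @ [e]) = Some e) \<and>
        (e \<in> Sv \<longrightarrow> A (alpha @ [e]) \<in> Some ` Sv \<union> {None}))"

definition gA :: "('e list \<Rightarrow> 'e option) \<Rightarrow> 'e list \<Rightarrow> 'e list" where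
  "gA A alpha = concat (map (\<lambda>i. case A (take (Suc i) alpha) of None \<Rightarrow> [] | Some e \<Rightarrow> [e]) [0..<length alpha])"

definition SA :: "('e list \<Rightarrow> 'e set) \<Rightarrow> ('e list \<Rightarrow> 'e option) \<Rightarrow> 'e list \<Rightarrow> 'e set" where
  "SA S A = S \<circ> gA A"

definition stealthy_along :: "('x \<Rightarrow> 'e \<Rightarrow> 'x option) \<Rightarrow> 'x set \<Rightarrow> 'e set \<Rightarrow> ('e list \<Rightarrow> 'e set)
    \<Rightarrow> ('e list \<Rightarrow> 'e option) \<Rightarrow> 'e list \<Rightarrow> bool" where
  "stealthy_along d X0 So S A alpha \<longleftrightarrow> estC d X0 So S (gA A alpha) \<noteq> {}"

definition UR :: "('x \<Rightarrow> 'e \<Rightarrow> 'x option) \<Rightarrow> 'e set \<Rightarrow> 'e set \<Rightarrow> 'x set \<Rightarrow> 'x set" where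
  "UR d So gam q = {y. \<exists>x\<in>q. \<exists>s. set s \<subseteq> (- So) \<inter> gam \<and> dstar d x s = Some y}"

definition NX :: "('x \<Rightarrow> 'e \<Rightarrow> 'x option) \<Rightarrow> 'e option \<Rightarrow> 'x set \<Rightarrow> 'x set" where
  "NX d eo q = (case eo of None \<Rightarrow> q | Some e \<Rightarrow> {y. \<exists>x\<in>q. d x e = Some y})"

definition Obs :: "('x \<Rightarrow> 'e \<Rightarrow> 'x option) \<Rightarrow> 'e set \<Rightarrow> 'x set \<Rightarrow> 'e set \<Rightarrow> 'e set" where
  "Obs d So q gam = {e \<in> So \<inter> gam. \<exists>x\<in>q. \<exists>w. set w \<subseteq> (- So) \<inter> gam \<and> dstar d x (w @ [e]) \<noteq> None}"

definition aug :: "('x \<Rightarrow> 'e \<Rightarrow> 'x option) \<Rightarrow> ('x \<times> 'x) \<Rightarrow> 'e \<Rightarrow> ('x \<times> 'x) option" where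
  "aug d p e = map_option (\<lambda>y. (fst p, y)) (d (snd p) e)"

datatype 'e mevent = MObs 'e | MHat 'e | MHatEps

(* z = None encodes z_att *)
datatype ('x, 'z, 'e) mstate =
    Env "'x set" "('x \<times> 'x) set" "'z option"
  | Att "'x set" "('x \<times> 'x) set" "'z option" 'e

definition Vset :: "'e set \<Rightarrow> 'e \<Rightarrow> 'e mevent set" where
  "Vset Sv e = (if e \<in> Sv then MHat ` Sv \<union> {MHatEps} else {MHat e})"

fun xi_eps :: "('z \<Rightarrow> 'e \<Rightarrow> 'z option) \<Rightarrow> 'z \<Rightarrow> 'e option \<Rightarrow> 'z option" where
  "xi_eps xi z None = Some z"
| "xi_eps xi z (Some e) = xi z e"

fun hat_val :: "'e mevent \<Rightarrow> 'e option" where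
  "hat_val (MHat e) = Some e"
| "hat_val MHatEps = None"
| "hat_val (MObs e) = None"

fun fM :: "('x \<Rightarrow> 'e \<Rightarrow> 'x option) \<Rightarrow> 'e set \<Rightarrow> 'e set \<Rightarrow> ('z \<Rightarrow> 'e \<Rightarrow> 'z option)
    \<Rightarrow> ('x, 'z, 'e) mstate \<Rightarrow> 'e mevent \<Rightarrow> ('x, 'z, 'e) mstate option" where
  "fM d So Sv xi (Env q qt (Some z)) ev =
     (case ev of MObs e \<Rightarrow>
        (if e \<in> Obs d So (snd ` qt) (DeltaH xi z) then Some (Att q qt (Some z) e) else None)
      | _ \<Rightarrow> None)"
| "fM d So Sv xi (Env q qt None) ev = None"
| "fM d So Sv xi (Att q qt (Some z) e) ev =
     (if ev \<in> Vset Sv e then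
        (let ea = hat_val ev;
             q' = NX d ea (UR d So (DeltaH xi z) q);
             qt' = NX (aug d) (Some e) (UR (aug d) So (DeltaH xi z) qt)
         in if q' \<noteq> {} then Some (Env q' qt' (xi_eps xi z ea))
            else Some (Env q' qt' None))
      else None)"
| "fM d So Sv xi (Att q qt None e) ev = None"

fun fMstar :: "('x \<Rightarrow> 'e \<Rightarrow> 'x option) \<Rightarrow> 'e set \<Rightarrow> 'e set \<Rightarrow> ('z \<Rightarrow> 'e \<Rightarrow> 'z option)
    \<Rightarrow> ('x, 'z, 'e) mstate \<Rightarrow> 'e mevent list \<Rightarrow> ('x, 'z, 'e) mstate option" where
  "fMstar d So Sv xi m [] = Some m"
| "fMstar d So Sv xi m (ev # evs) =
     (case fM d So Sv xi m ev of None \<Rightarrow> None | Some m' \<Rightarrow> fMstar d So Sv xi m' evs)"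

definition q0M :: "'x set \<Rightarrow> 'z \<Rightarrow> ('x, 'z, 'e) mstate" where
  "q0M X0 z0 = Env X0 {(x0, x0) | x0. x0 \<in> X0} (Some z0)"

definition Qatt :: "('x, 'z, 'e) mstate set" where
  "Qatt = {Env q qt None | q qt. True}"

fun hat_of :: "'e option \<Rightarrow> 'e mevent" where
  "hat_of None = MHatEps"
| "hat_of (Some e) = MHat e"

definition ext_string :: "('e list \<Rightarrow> 'e option) \<Rightarrow> 'e list \<Rightarrow> 'e mevent list" where
  "ext_string A alpha = concat (map (\<lambda>i. [MObs (alpha ! i), hat_of (A (take (Suc i) alpha))]) [0..<length alpha])"

end

theory Submission
  imports Defs
begin

text \<open>
  Along a stealthy run, the state \<open>Env q qt (Some z)\<close> that M reaches on the extended string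
  of \<open>\<alpha>\<close> is pinned down by two current-state estimates: \<open>z\<close> is the state of H after the
  corrupted observation \<open>g\<^sub>A(\<alpha>)\<close>, the unobservable reach of \<open>q\<close> under the current control
  \<open>S(g\<^sub>A(\<alpha>))\<close> is the estimate \<open>E\<^sub>S\<^sub>/\<^sub>G(g\<^sub>A(\<alpha>))\<close> of the deceived supervisor, and that of the
  second components of \<open>qt\<close> is the true estimate \<open>E\<^sub>S\<^sub>A\<^sub>/\<^sub>G(\<alpha>)\<close>. One round \<open>\<sigma> \<sigma>\<^sub>a\<close>
  preserves this: \<open>\<sigma>\<close> is enabled in M because \<open>\<alpha>\<sigma>\<close> is observed under \<open>S\<^sub>A\<close>, \<open>qt\<close> advances by
  \<open>\<sigma>\<close> and \<open>q\<close> by the doctored event \<open>\<sigma>\<^sub>a\<close>. The estimate after \<open>g\<^sub>A(\<alpha>\<sigma>)\<close> is then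
  nonempty exactly when H admits \<open>\<sigma>\<^sub>a\<close> and the advanced \<open>q\<close> is nonempty, which is exactly
  when M does not move to \<open>z\<^sub>a\<^sub>t\<^sub>t\<close>.
\<close>

lemma dstar_append:
  "dstar d x (s @ t) = (case dstar d x s of None \<Rightarrow> None | Some y \<Rightarrow> dstar d y t)"
  by (induct s arbitrary: x) (auto split: option.split)

lemma dstar_snoc:
  "dstar d x (s @ [e]) = (case dstar d x s of None \<Rightarrow> None | Some y \<Rightarrow> d y e)"
  by (simp add: dstar_append split: option.split)

lemma proj_Nil [simp]: "proj So [] = []"
  by (simp add: proj_def)

lemma proj_Cons [simp]: "proj So (e # s) = (if e \<in> So then e # proj So s else proj So s)"
  by (simp add: proj_def)

lemma proj_append [simp]: "proj So (s @ t) = proj So s @ proj So t"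
  by (simp add: proj_def)

lemma set_proj_subset: "set (proj So s) \<subseteq> So"
  by (auto simp: proj_def)

lemma proj_eq_Nil_iff: "proj So s = [] \<longleftrightarrow> set s \<subseteq> - So"
  by (auto simp: proj_def filter_empty_conv)

lemma proj_eq_ConsD:
  "proj So s = e # beta \<Longrightarrow> \<exists>us vs. s = us @ e # vs \<and> set us \<subseteq> - So \<and> e \<in> So \<and> proj So vs = beta"
  unfolding proj_def by (drule filter_eq_ConsD) auto

lemma proj_eq_appendD: "proj So s = beta @ t \<Longrightarrow> \<exists>s1 s2. s = s1 @ s2 \<and> proj So s1 = beta"
proof (induct beta arbitrary: s)
  case Nil
  show ?case by (rule exI[of _ "[]"]) simp
next
  case (Cons b beta)
  then obtain us vs where "s = us @ b # vs" "set us \<subseteq> - So" "b \<in> So" "proj So vs = beta @ t"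
    using proj_eq_ConsD[of So s b "beta @ t"] by auto
  moreover obtain v1 v2 where "vs = v1 @ v2" "proj So v1 = beta"
    using Cons.hyps \<open>proj So vs = beta @ t\<close> by blast
  ultimately show ?case by (intro exI[of _ "us @ b # v1"] exI[of _ v2]) (simp add: proj_eq_Nil_iff)
qed

lemma proj_eq_snocD:
  "proj So s = beta @ [e] \<Longrightarrow> \<exists>s1 u. s = s1 @ e # u \<and> proj So s1 = beta \<and> set u \<subseteq> - So"
proof -
  assume "proj So s = beta @ [e]"
  then obtain s1 s2 where s: "s = s1 @ s2" "proj So s1 = beta" "proj So s2 = [e]"
    using proj_eq_appendD[of So s beta "[e]"] by auto
  then obtain us u where "s2 = us @ e # u" "set us \<subseteq> - So" "proj So u = []"
    using proj_eq_ConsD[of So s2 e "[]"] by auto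
  with s show ?thesis
    by (intro exI[of _ "s1 @ us"] exI[of _ u]) (simp add: proj_eq_Nil_iff)
qed

lemma Lsup_snoc_iff:
  "s @ [e] \<in> Lsup d So T x0 \<longleftrightarrow>
     s \<in> Lsup d So T x0 \<and> dstar d x0 (s @ [e]) \<noteq> None \<and> e \<in> T (proj So s)"
  by (auto elim: Lsup.cases intro: Lsup.snoc)

lemma Lsup_dstar_defined: "s \<in> Lsup d So T x0 \<Longrightarrow> dstar d x0 s \<noteq> None"
  by (induct rule: Lsup.induct) auto

lemma Lsup_appendD: "s @ t \<in> Lsup d So T x0 \<Longrightarrow> s \<in> Lsup d So T x0"
proof (induct t rule: rev_induct)
  case (snoc e t)
  then show ?case using Lsup_snoc_iff[of "s @ t" e d So T x0] by simp
qed simp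

lemma Lsup_append_unobs_iff:
  assumes "set u \<subseteq> - So"
  shows "s @ u \<in> Lsup d So T x0 \<longleftrightarrow>
           s \<in> Lsup d So T x0 \<and> set u \<subseteq> T (proj So s) \<and> dstar d x0 (s @ u) \<noteq> None"
  using assms
proof (induct u rule: rev_induct)
  case Nil
  then show ?case using Lsup_dstar_defined by auto
next
  case (snoc e u)
  have IH: "s @ u \<in> Lsup d So T x0 \<longleftrightarrow>
              s \<in> Lsup d So T x0 \<and> set u \<subseteq> T (proj So s) \<and> dstar d x0 (s @ u) \<noteq> None"
    using snoc by simp
  have "proj So (s @ u) = proj So s"
    using snoc.prems by (simp add: proj_eq_Nil_iff)
  then have step: "s @ u @ [e] \<in> Lsup d So T x0 \<longleftrightarrow>
      s @ u \<in> Lsup d So T x0 \<and> dstar d x0 (s @ u @ [e]) \<noteq> None \<and> e \<in> T (proj So s)"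
    using Lsup_snoc_iff[of "s @ u" e d So T x0] by simp
  have "dstar d x0 (s @ u @ [e]) \<noteq> None \<Longrightarrow> dstar d x0 (s @ u) \<noteq> None"
    using dstar_append[of d x0 "s @ u" "[e]"] by (auto split: option.splits)
  with IH step show ?case by auto
qed

lemma Lsup_proj_prefix:
  assumes "s \<in> Lsup d So T x0" and "proj So s = beta @ t"
  obtains s' where "s' \<in> Lsup d So T x0" and "proj So s' = beta"
proof -
  obtain s1 s2 where "s = s1 @ s2" "proj So s1 = beta"
    using proj_eq_appendD[OF assms(2)] by blast
  have "s1 \<in> Lsup d So T x0"
    using assms(1) unfolding \<open>s = s1 @ s2\<close> by (rule Lsup_appendD)
  from this \<open>proj So s1 = beta\<close> show thesis by (rule that)
qed

lemma mem_proj_LsupG_iff: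
  "beta \<in> proj So ` LsupG d X0 So T \<longleftrightarrow> (\<exists>x0\<in>X0. \<exists>s\<in>Lsup d So T x0. proj So s = beta)"
  unfolding LsupG_def by blast

lemma proj_LsupG_appendD:
  "beta @ t \<in> proj So ` LsupG d X0 So T \<Longrightarrow> beta \<in> proj So ` LsupG d X0 So T"
  unfolding mem_proj_LsupG_iff by (metis Lsup_proj_prefix)

lemma LsupG_subset_LangG: "LsupG d X0 So T \<subseteq> LangG d X0"
  unfolding LsupG_def LangG_def Lang_def by (auto dest: Lsup_dstar_defined)

lemma subset_UR: "q \<subseteq> UR d So g q"
  unfolding UR_def by (auto intro!: exI[of _ "[]"])

lemma UR_UR: "UR d So g (UR d So g q) = UR d So g q"
proof
  show "UR d So g (UR d So g q) \<subseteq> UR d So g q"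
  proof
    fix y assume "y \<in> UR d So g (UR d So g q)"
    then obtain x0 x s0 s where "x0 \<in> q" "set s0 \<subseteq> - So \<inter> g" "dstar d x0 s0 = Some x"
      and "set s \<subseteq> - So \<inter> g" "dstar d x s = Some y"
      unfolding UR_def by blast
    then show "y \<in> UR d So g q"
      unfolding UR_def by (intro CollectI bexI[of _ x0] exI[of _ "s0 @ s"]) (auto simp: dstar_append)
  qed
qed (rule subset_UR)

lemma UR_eq_empty_iff: "UR d So g q = {} \<longleftrightarrow> q = {}"
  using subset_UR[of q d So g] by (auto simp: UR_def)

lemma estC_Nil: "estC d X0 So T [] = UR d So (T []) X0"
  unfolding estC_def UR_def
  using Lsup_append_unobs_iff[of _ So "[]" d T] Lsup.Nil[of d So T] by (fastforce simp: proj_eq_Nil_iff)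

lemma estC_snoc:
  assumes "e \<in> So"
  shows "estC d X0 So T (beta @ [e]) =
    (if e \<in> T beta then UR d So (T (beta @ [e])) (NX d (Some e) (estC d X0 So T beta)) else {})"
proof (intro set_eqI iffI)
  fix y assume "y \<in> estC d X0 So T (beta @ [e])"
  then obtain x0 s where "x0 \<in> X0" "s \<in> Lsup d So T x0" "proj So s = beta @ [e]" "dstar d x0 s = Some y"
    unfolding estC_def by blast
  moreover obtain s1 u where s: "s = s1 @ e # u" "proj So s1 = beta" "set u \<subseteq> - So"
    using proj_eq_snocD[OF \<open>proj So s = beta @ [e]\<close>] by blast
  ultimately have "s1 @ [e] \<in> Lsup d So T x0" "set u \<subseteq> T (beta @ [e])"
    using Lsup_append_unobs_iff[of u So "s1 @ [e]" d T x0] assms by auto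
  then have "s1 \<in> Lsup d So T x0" "dstar d x0 (s1 @ [e]) \<noteq> None" "e \<in> T beta"
    using Lsup_snoc_iff[of s1 e d So T x0] s by auto
  then obtain y0 y1 where "dstar d x0 s1 = Some y0" "d y0 e = Some y1"
    by (auto simp: dstar_snoc split: option.splits)
  moreover have "y0 \<in> estC d X0 So T beta"
    unfolding estC_def using \<open>x0 \<in> X0\<close> \<open>s1 \<in> Lsup d So T x0\<close> s(2) calculation(1) by blast
  moreover have "dstar d y1 u = Some y"
    using \<open>dstar d x0 s = Some y\<close> s(1) calculation by (simp add: dstar_append)
  ultimately show "y \<in> (if e \<in> T beta then UR d So (T (beta @ [e])) (NX d (Some e) (estC d X0 So T beta)) else {})"
    using \<open>e \<in> T beta\<close> \<open>set u \<subseteq> T (beta @ [e])\<close> s(3) unfolding UR_def NX_def by auto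
next
  fix y assume "y \<in> (if e \<in> T beta then UR d So (T (beta @ [e])) (NX d (Some e) (estC d X0 So T beta)) else {})"
  then obtain y0 y1 u where "e \<in> T beta" "y0 \<in> estC d X0 So T beta" "d y0 e = Some y1"
    and u: "set u \<subseteq> - So" "set u \<subseteq> T (beta @ [e])" "dstar d y1 u = Some y"
    unfolding UR_def NX_def by (auto split: if_splits)
  then obtain x0 s1 where s1: "x0 \<in> X0" "s1 \<in> Lsup d So T x0" "proj So s1 = beta" "dstar d x0 s1 = Some y0"
    unfolding estC_def by blast
  have "dstar d x0 (s1 @ [e]) = Some y1"
    using s1(4) \<open>d y0 e = Some y1\<close> by (simp add: dstar_snoc)
  then have run: "dstar d x0 ((s1 @ [e]) @ u) = Some y"
    using u(3) by (simp only: dstar_append) simp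
  have "s1 @ [e] \<in> Lsup d So T x0"
    using Lsup.snoc[OF s1(2)] \<open>dstar d x0 (s1 @ [e]) = Some y1\<close> \<open>e \<in> T beta\<close> s1(3) by simp
  then have "(s1 @ [e]) @ u \<in> Lsup d So T x0"
    using Lsup_append_unobs_iff[OF u(1), of "s1 @ [e]" d T x0] u(2) run s1(3) assms by simp
  moreover have "proj So ((s1 @ [e]) @ u) = beta @ [e]"
    using s1(3) u(1) assms by (simp add: proj_eq_Nil_iff[THEN iffD2])
  ultimately show "y \<in> estC d X0 So T (beta @ [e])"
    unfolding estC_def using s1(1) run by blast
qed

lemma estC_append_nonempty:
  "estC d X0 So T (beta @ t) \<noteq> {} \<Longrightarrow> estC d X0 So T beta \<noteq> {}"
proof -
  assume "estC d X0 So T (beta @ t) \<noteq> {}"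
  then obtain x0 s where "x0 \<in> X0" "s \<in> Lsup d So T x0" "proj So s = beta @ t"
    unfolding estC_def by blast
  moreover obtain s' where "s' \<in> Lsup d So T x0" "proj So s' = beta"
    using Lsup_proj_prefix[OF calculation(2,3)] .
  moreover obtain y where "dstar d x0 s' = Some y"
    using Lsup_dstar_defined[OF calculation(4)] by blast
  ultimately show ?thesis
    unfolding estC_def by blast
qed

lemma UR_estC_snoc:
  assumes est: "UR d So (T beta) q = estC d X0 So T beta"
    and "e \<in> So" and "beta @ [e] \<in> proj So ` LsupG d X0 So T"
  shows "e \<in> Obs d So q (T beta)"
    and "UR d So (T (beta @ [e])) (NX d (Some e) (UR d So (T beta) q)) = estC d X0 So T (beta @ [e])"
proof -
  obtain x0 s where "x0 \<in> X0" "s \<in> Lsup d So T x0" "proj So s = beta @ [e]"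
    using assms(3) unfolding mem_proj_LsupG_iff by blast
  moreover obtain y where "dstar d x0 s = Some y"
    using Lsup_dstar_defined[OF calculation(2)] by blast
  ultimately have "estC d X0 So T (beta @ [e]) \<noteq> {}"
    unfolding estC_def by blast
  then have "e \<in> T beta" and "NX d (Some e) (estC d X0 So T beta) \<noteq> {}"
    unfolding estC_snoc[OF \<open>e \<in> So\<close>] by (auto simp: UR_eq_empty_iff split: if_splits)
  then obtain x w y0 y1 where "x \<in> q" "set w \<subseteq> - So \<inter> T beta" "dstar d x w = Some y0" "d y0 e = Some y1"
    unfolding est[symmetric] NX_def UR_def by auto
  with \<open>e \<in> So\<close> \<open>e \<in> T beta\<close> show "e \<in> Obs d So q (T beta)"
    unfolding Obs_def by (intro CollectI conjI bexI[of _ x] exI[of _ w]) (auto simp: dstar_snoc)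
  show "UR d So (T (beta @ [e])) (NX d (Some e) (UR d So (T beta) q)) = estC d X0 So T (beta @ [e])"
    unfolding est estC_snoc[OF \<open>e \<in> So\<close>] using \<open>e \<in> T beta\<close> by simp
qed

lemma dstar_proj_eq:
  assumes "\<forall>z e z'. xi z e = Some z' \<longrightarrow> z' \<noteq> z \<longrightarrow> e \<in> So"
  shows "dstar xi z s = Some z' \<Longrightarrow> dstar xi z (proj So s) = Some z'"
proof (induct s arbitrary: z)
  case (Cons e s)
  then obtain y where y: "xi z e = Some y" "dstar xi y s = Some z'"
    by (auto split: option.splits)
  show ?case
  proof (cases "e \<in> So")
    case False
    with assms y have "y = z" by blast
    with False Cons.hyps y show ?thesis by simp
  qed (use Cons.hyps y in simp)
qed simp

lemma realizes_estC_nonempty: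
  assumes "realizes d X0 So S xi z0" and "estC d X0 So S beta \<noteq> {}"
  shows "\<exists>z. dstar xi z0 beta = Some z \<and> DeltaH xi z = S beta"
proof -
  note loops = conjunct1[OF assms(1)[unfolded realizes_def]]
    and realizer = conjunct2[OF assms(1)[unfolded realizes_def]]
  obtain x0 s where "x0 \<in> X0" "s \<in> Lsup d So S x0" "proj So s = beta"
    using assms(2) unfolding estC_def by blast
  then have "s \<in> LsupG d X0 So S"
    unfolding LsupG_def by blast
  then obtain z where "dstar xi z0 s = Some z" "DeltaH xi z = S (proj So s)"
    using realizer by blast
  with dstar_proj_eq[OF loops] \<open>proj So s = beta\<close> show ?thesis
    by auto
qed

lemma dstar_aug: "dstar (aug d) p s = map_option (\<lambda>y. (fst p, y)) (dstar d (snd p) s)"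
  by (induct s arbitrary: p) (auto simp: aug_def split: option.splits)

lemma image_snd_NX_aug: "snd ` NX (aug d) (Some e) qt = NX d (Some e) (snd ` qt)"
  unfolding NX_def aug_def by force

lemma image_snd_UR_aug: "snd ` UR (aug d) So g qt = UR d So g (snd ` qt)"
proof (intro set_eqI iffI)
  fix y assume "y \<in> snd ` UR (aug d) So g qt"
  then show "y \<in> UR d So g (snd ` qt)"
    unfolding UR_def dstar_aug by force
next
  fix y assume "y \<in> UR d So g (snd ` qt)"
  then obtain p s where "p \<in> qt" "set s \<subseteq> - So \<inter> g" "dstar d (snd p) s = Some y"
    unfolding UR_def by force
  then show "y \<in> snd ` UR (aug d) So g qt"
    unfolding UR_def dstar_aug by (intro image_eqI[of _ _ "(fst p, y)"]) auto
qed

lemma augmented_estimate_step: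
  assumes "UR d So (T beta) (snd ` qt) = estC d X0 So T beta"
    and "e \<in> So" and "beta @ [e] \<in> proj So ` LsupG d X0 So T"
  shows "e \<in> Obs d So (snd ` qt) (T beta)"
    and "UR d So (T (beta @ [e])) (snd ` NX (aug d) (Some e) (UR (aug d) So (T beta) qt)) =
      estC d X0 So T (beta @ [e])"
  using UR_estC_snoc[OF assms] unfolding image_snd_NX_aug image_snd_UR_aug by blast+

lemma attacker_snoc:
  assumes "attacker d X0 So Sv A" and "Sv \<subseteq> So" and "e \<in> So"
    and "alpha @ [e] \<in> proj So ` LangG d X0"
  shows "hat_of (A (alpha @ [e])) \<in> Vset Sv e" and "set_option (A (alpha @ [e])) \<subseteq> So"
proof -
  have "(e \<notin> Sv \<longrightarrow> A (alpha @ [e]) = Some e) \<and> (e \<in> Sv \<longrightarrow> A (alpha @ [e]) \<in> Some ` Sv \<union> {None})"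
    using assms(1,4) unfolding attacker_def by simp
  with assms(2,3) show "hat_of (A (alpha @ [e])) \<in> Vset Sv e" and "set_option (A (alpha @ [e])) \<subseteq> So"
    unfolding Vset_def by (cases "e \<in> Sv"; cases "A (alpha @ [e])"; auto)+
qed

lemma gA_Nil [simp]: "gA A [] = []"
  by (simp add: gA_def)

lemma gA_snoc:
  "gA A (alpha @ [e]) = gA A alpha @ (case A (alpha @ [e]) of None \<Rightarrow> [] | Some e' \<Rightarrow> [e'])"
  unfolding gA_def by (simp, intro arg_cong[where f = concat] map_cong) auto

lemma ext_string_Nil [simp]: "ext_string A [] = []"
  by (simp add: ext_string_def)

lemma ext_string_snoc:
  "ext_string A (alpha @ [e]) = ext_string A alpha @ [MObs e, hat_of (A (alpha @ [e]))]"
  unfolding ext_string_def by (simp add: nth_append, intro arg_cong[where f = concat] map_cong) auto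

lemma fMstar_append:
  "fMstar d So Sv xi m (evs @ evs') =
     (case fMstar d So Sv xi m evs of None \<Rightarrow> None | Some m' \<Rightarrow> fMstar d So Sv xi m' evs')"
  by (induct evs arbitrary: m) (auto split: option.split)

lemma hat_val_hat_of [simp]: "hat_val (hat_of a) = a"
  by (cases a) auto

lemma dstar_xi_eps:
  "dstar xi z0 beta = Some z \<Longrightarrow> xi_eps xi z a = Some z' \<Longrightarrow>
     dstar xi z0 (beta @ (case a of None \<Rightarrow> [] | Some e \<Rightarrow> [e])) = Some z'"
  by (cases a) (simp_all add: dstar_snoc)

lemma attacked_estimate_step:
  assumes DeltaH: "DeltaH xi z = S beta"
    and est: "UR d So (S beta) q = estC d X0 So S beta"
    and "estC d X0 So S beta \<noteq> {}" and "set_option a \<subseteq> So"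
  defines "beta' \<equiv> beta @ (case a of None \<Rightarrow> [] | Some e \<Rightarrow> [e])"
    and "q' \<equiv> NX d a (UR d So (S beta) q)"
  shows "q' \<noteq> {} \<and> xi_eps xi z a \<noteq> None \<longleftrightarrow> estC d X0 So S beta' \<noteq> {}"
    and "estC d X0 So S beta' \<noteq> {} \<Longrightarrow> UR d So (S beta') q' = estC d X0 So S beta'"
proof -
  have None: "beta' = beta \<and> q' = estC d X0 So S beta \<and> xi_eps xi z a = Some z" if "a = None"
    using that unfolding beta'_def q'_def by (simp add: NX_def est)
  have Some: "(xi_eps xi z a \<noteq> None \<longleftrightarrow> e \<in> S beta) \<and>
      estC d X0 So S beta' = (if e \<in> S beta then UR d So (S beta') q' else {})" if "a = Some e" for e
  proof -
    have "e \<in> So"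
      using assms(4) that by simp
    moreover have "xi z e \<noteq> None \<longleftrightarrow> e \<in> S beta"
      using DeltaH unfolding DeltaH_def by blast
    ultimately show ?thesis
      using that unfolding beta'_def q'_def est by (simp add: estC_snoc)
  qed
  show "q' \<noteq> {} \<and> xi_eps xi z a \<noteq> None \<longleftrightarrow> estC d X0 So S beta' \<noteq> {}"
    using None Some assms(3) by (cases a) (auto simp: UR_eq_empty_iff)
  show "UR d So (S beta') q' = estC d X0 So S beta'" if "estC d X0 So S beta' \<noteq> {}"
    using None Some that est UR_UR[of d So "S beta" q] by (cases a) (auto split: if_splits)
qed

text \<open>M stores each estimate before the unobservable reach under the current control. The first
  components of \<open>qt\<close> (initial states of the augmented system) are irrelevant here.\<close>

definition tracks_estimates ::
    "('x \<Rightarrow> 'e \<Rightarrow> 'x option) \<Rightarrow> 'x set \<Rightarrow> 'e set \<Rightarrow> ('e list \<Rightarrow> 'e set) \<Rightarrow> ('e list \<Rightarrow> 'e option)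
      \<Rightarrow> ('z \<Rightarrow> 'e \<Rightarrow> 'z option) \<Rightarrow> 'z \<Rightarrow> 'e list \<Rightarrow> 'x set \<Rightarrow> ('x \<times> 'x) set \<Rightarrow> 'z \<Rightarrow> bool" where
  "tracks_estimates d X0 So S A xi z0 alpha q qt z \<longleftrightarrow>
     dstar xi z0 (gA A alpha) = Some z \<and>
     UR d So (S (gA A alpha)) q = estC d X0 So S (gA A alpha) \<and>
     UR d So (S (gA A alpha)) (snd ` qt) = estC d X0 So (SA S A) alpha"

lemma tracks_estimates_Nil: "tracks_estimates d X0 So S A xi z0 [] X0 {(x0, x0) | x0. x0 \<in> X0} z0"
proof -
  have "snd ` {(x0, x0) | x0. x0 \<in> X0} = X0"
    by force
  then show ?thesis
    unfolding tracks_estimates_def by (simp add: estC_Nil SA_def)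
qed

lemma tracks_estimates_DeltaH:
  assumes "realizes d X0 So S xi z0" and "tracks_estimates d X0 So S A xi z0 alpha q qt z"
    and "stealthy_along d X0 So S A alpha"
  shows "DeltaH xi z = S (gA A alpha)"
  using realizes_estC_nonempty[OF assms(1)] assms(2,3)
  unfolding tracks_estimates_def stealthy_along_def by fastforce

lemma tracks_estimates_snoc:
  assumes realizes: "realizes d X0 So S xi z0" and "Sv \<subseteq> So" and "attacker d X0 So Sv A"
    and "sigma \<in> So" and obs: "alpha @ [sigma] \<in> proj So ` LsupG d X0 So (SA S A)"
    and tracks: "tracks_estimates d X0 So S A xi z0 alpha q qt z"
    and "stealthy_along d X0 So S A alpha"
  shows "\<exists>q' qt' z'.
    fMstar d So Sv xi (Env q qt (Some z)) [MObs sigma, hat_of (A (alpha @ [sigma]))] = Some (Env q' qt' z') \<and>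
    (z' \<noteq> None \<longleftrightarrow> stealthy_along d X0 So S A (alpha @ [sigma])) \<and>
    (\<forall>z''. z' = Some z'' \<longrightarrow> tracks_estimates d X0 So S A xi z0 (alpha @ [sigma]) q' qt' z'')"
proof -
  define beta a where "beta = gA A alpha" and "a = A (alpha @ [sigma])"
  define beta' where "beta' = gA A (alpha @ [sigma])"
  have beta': "beta' = beta @ (case a of None \<Rightarrow> [] | Some e \<Rightarrow> [e])"
    unfolding beta'_def beta_def a_def by (rule gA_snoc)
  have run: "dstar xi z0 beta = Some z" and est: "UR d So (S beta) q = estC d X0 So S beta"
    and true_est: "UR d So (SA S A alpha) (snd ` qt) = estC d X0 So (SA S A) alpha"
    using tracks unfolding tracks_estimates_def beta_def SA_def by auto
  have "estC d X0 So S beta \<noteq> {}"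
    using assms(7) unfolding stealthy_along_def beta_def .
  have DeltaH: "DeltaH xi z = S beta"
    using tracks_estimates_DeltaH[OF realizes tracks assms(7)] unfolding beta_def .
  have "alpha @ [sigma] \<in> proj So ` LangG d X0"
    using obs LsupG_subset_LangG by blast
  then have Vset: "hat_of a \<in> Vset Sv sigma" and "set_option a \<subseteq> So"
    unfolding a_def using attacker_snoc[OF assms(3,2,4)] by blast+
  note true_step = augmented_estimate_step[OF true_est \<open>sigma \<in> So\<close> obs]
  note attacked_step = attacked_estimate_step[OF DeltaH est \<open>estC d X0 So S beta \<noteq> {}\<close> \<open>set_option a \<subseteq> So\<close>,
      folded beta']
  define q' where "q' = NX d a (UR d So (S beta) q)"
  define qt' where "qt' = NX (aug d) (Some sigma) (UR (aug d) So (S beta) qt)"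
  define z' where "z' = (if q' \<noteq> {} then xi_eps xi z a else None)"
  have "fMstar d So Sv xi (Env q qt (Some z)) [MObs sigma, hat_of a] = Some (Env q' qt' z')"
    using true_step(1) Vset unfolding q'_def qt'_def z'_def SA_def by (simp add: Let_def DeltaH beta_def)
  moreover have "z' \<noteq> None \<longleftrightarrow> stealthy_along d X0 So S A (alpha @ [sigma])"
    using attacked_step(1) unfolding z'_def q'_def stealthy_along_def beta'_def by auto
  moreover have "tracks_estimates d X0 So S A xi z0 (alpha @ [sigma]) q' qt' z''" if "z' = Some z''" for z''
  proof -
    have "q' \<noteq> {}" "xi_eps xi z a = Some z''"
      using that unfolding z'_def by (auto split: if_splits)
    moreover have "UR d So (S beta') (snd ` qt') = estC d X0 So (SA S A) (alpha @ [sigma])"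
      using true_step(2) unfolding qt'_def beta'_def beta_def by (simp add: SA_def)
    ultimately show ?thesis
      using dstar_xi_eps[OF run] attacked_step
      unfolding tracks_estimates_def beta'_def[symmetric] beta' q'_def by simp
  qed
  ultimately show ?thesis
    unfolding a_def by blast
qed

lemma tracks_estimates_run:
  assumes "realizes d X0 So S xi z0" and "Sv \<subseteq> So" and "attacker d X0 So Sv A"
  shows "alpha \<in> proj So ` LsupG d X0 So (SA S A) \<Longrightarrow> stealthy_along d X0 So S A alpha \<Longrightarrow>
    \<exists>q qt z. fMstar d So Sv xi (q0M X0 z0) (ext_string A alpha) = Some (Env q qt (Some z)) \<and>
      tracks_estimates d X0 So S A xi z0 alpha q qt z"
proof (induct alpha rule: rev_induct)
  case Nil
  show ?case
    using tracks_estimates_Nil by (simp add: q0M_def)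
next
  case (snoc sigma alpha)
  from snoc.prems(1) obtain s where "alpha @ [sigma] = proj So s"
    by (rule imageE)
  then have "sigma \<in> So"
    using set_proj_subset[of So s] by (metis in_set_conv_decomp subsetD)
  have "stealthy_along d X0 So S A alpha"
    using snoc.prems(2) unfolding stealthy_along_def gA_snoc by (rule estC_append_nonempty)
  then obtain q qt z where
    run: "fMstar d So Sv xi (q0M X0 z0) (ext_string A alpha) = Some (Env q qt (Some z))"
    and tracks: "tracks_estimates d X0 So S A xi z0 alpha q qt z"
    using snoc.hyps[OF proj_LsupG_appendD[OF snoc.prems(1)]] by blast
  obtain q' qt' z' where
    step: "fMstar d So Sv xi (Env q qt (Some z)) [MObs sigma, hat_of (A (alpha @ [sigma]))] =
      Some (Env q' qt' z')"
    and "z' \<noteq> None \<longleftrightarrow> stealthy_along d X0 So S A (alpha @ [sigma])"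
    and "\<forall>z''. z' = Some z'' \<longrightarrow> tracks_estimates d X0 So S A xi z0 (alpha @ [sigma]) q' qt' z''"
    using tracks_estimates_snoc[OF assms \<open>sigma \<in> So\<close> snoc.prems(1) tracks
        \<open>stealthy_along d X0 So S A alpha\<close>] by blast
  with snoc.prems(2) obtain z'' where "z' = Some z''"
    "tracks_estimates d X0 So S A xi z0 (alpha @ [sigma]) q' qt' z''"
    by auto
  with run step show ?case
    by (auto simp: ext_string_snoc fMstar_append)
qed

theorem lemma1:
  fixes X X0 :: "'x set" and d :: "'x \<Rightarrow> 'e \<Rightarrow> 'x option"
    and So Suco Sv :: "'e set" and S :: "'e list \<Rightarrow> 'e set"
    and xi :: "'z \<Rightarrow> 'e \<Rightarrow> 'z option" and z0 :: 'z
    and A :: "'e list \<Rightarrow> 'e option" and alpha :: "'e list" and sigma :: 'e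
  assumes "finite (UNIV :: 'e set)"
    and "plant_wf X X0 d"
    and "supervisor d X0 So Suco S"
    and "realizes d X0 So S xi z0"
    and "Sv \<subseteq> So"
    and "attacker d X0 So Sv A"
    and "sigma \<in> So"
    and "alpha @ [sigma] \<in> proj So ` LsupG d X0 So (SA S A)"
    and "stealthy_along d X0 So S A alpha"
  shows "\<exists>qe. fMstar d So Sv xi (q0M X0 z0) (ext_string A (alpha @ [sigma])) = Some qe
           \<and> (stealthy_along d X0 So S A (alpha @ [sigma]) \<longleftrightarrow> qe \<notin> Qatt)"
proof -
  obtain q qt z where "fMstar d So Sv xi (q0M X0 z0) (ext_string A alpha) = Some (Env q qt (Some z))"
    and "tracks_estimates d X0 So S A xi z0 alpha q qt z"
    using tracks_estimates_run[OF assms(4-6) proj_LsupG_appendD[OF assms(8)] assms(9)] by blast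
  moreover obtain q' qt' z' where
    "fMstar d So Sv xi (Env q qt (Some z)) [MObs sigma, hat_of (A (alpha @ [sigma]))] = Some (Env q' qt' z')"
    and "z' \<noteq> None \<longleftrightarrow> stealthy_along d X0 So S A (alpha @ [sigma])"
    using tracks_estimates_snoc[OF assms(4-8) calculation(2) assms(9)] by blast
  moreover have "Env q' qt' z' \<notin> Qatt \<longleftrightarrow> z' \<noteq> None"
    unfolding Qatt_def by auto
  ultimately show ?thesis
    by (auto simp: ext_string_snoc fMstar_append)
qed

end
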